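(* For every instance such that $|S_2|>\pi_1+\pi_3+\pi_4-1$, $|S_2|\ge 4$ and $|S_2|$ is even, we have $H^{PW''}\le \tfrac{32000}{16947}H^*$ (note $\tfrac{32000}{16947}\approx 1.888$).
   Context: An instance consists of an integer $n\ge 1$ and growth rates $1=h(1)\ge h(2)\ge\cdots\ge h(n)>0$ of bamboos $b_1,\dots,b_n$. Bamboo Garden Trimming (discrete version): - All heights are $0$ initially. - On each day $t=1,2,\dots$ every bamboo $b_j$ grows by $h(j)$. - At the end of each day the gardener cuts exactly one bamboo $\sigma(t)\in\{1,\dots,n\}$ back to height $0$. The height of a schedule $\sigma:\mathbb{N}\to\{1,\dots,n\}$ is the supremum, over all days $t$ and all $j$, of the height of $b_j$ at the end of day $t$ just before the cut. $H^*$ denotes the infimum of this height over all schedules. Value of algorithm PW'': - Split $\{1,\dots,n\}$ into four sets: - $S_1=\{j: \tfrac23<h(j)\le 1\}$; - $S_2=\{j:\tfrac12<h(j)\le\tfrac23\}$; - $S_3=\{j: h(j)\le\tfrac12 \text{ and } \tfrac23 2^{-k}<h(j)\le 2^{-k}\text{ for some integer }k\ge1\}$; - $S_4=\{j: h(j)\le\tfrac12\text{ and } 2^{-(k+1)}<h(j)\le \tfrac23 2^{-k}\text{ for some integer }k\ge 1\}$. - Modified growths: $h''(j)=2^{-k}$ for $j\in S_3$ and $h''(j)=\tfrac23 2^{-k}$ for $j\in S_4$, with $k$ as in the definition of the set. - Let $\pi_1=|S_1|$, $sh_3=\sum_{j\in S_3}h''(j)$, $sh_4=\sum_{j\in S_4}h''(j)$,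 $\pi_3=\lfloor sh_3\rfloor$, $\pi_4=\lfloor sh_4\rfloor$, $f_3=sh_3-\pi_3$, $f_4=sh_4-\pi_4$. - Option (a): $\pi_R(a)=\lceil f_3+f_4\rceil$ and $z(a)=\pi_1+|S_2|+\pi_3+\pi_4+\pi_R(a)$. - Option (b): if $S_2=\emptyset$ put $z(b)=+\infty$. Otherwise let $h^*=\max_{j\in S_2}h(j)$ and $f_2=\tfrac12$ if $|S_2|$ is odd, $f_2=0$ if $|S_2|$ is even. Then $\pi_R(b)=\lceil f_2+f_3+f_4\rceil$ and $z(b)=2h^*\,(\pi_1+\lfloor |S_2|/2\rfloor+\pi_3+\pi_4+\pi_R(b))$. - The value returned by algorithm PW'' is $H^{PW''}=\min\{z(a),z(b)\}$. The paper takes this as the maximum height of the periodic pinwheel trimming schedule that it builds from these partitions. *)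

theory Defs
  imports Complex_Main "HOL-Library.Extended_Real"
begin

text \<open>An instance: n \<ge> 1 bamboos b_1..b_n with growth rates
  1 = h 1 \<ge> h 2 \<ge> ... \<ge> h n > 0.  Only the values h 1, ..., h n matter.\<close>
definition bgt_instance :: "nat \<Rightarrow> (nat \<Rightarrow> real) \<Rightarrow> bool" where
  "bgt_instance n h \<longleftrightarrow> n \<ge> 1 \<and> h 1 = 1 \<and>
     (\<forall>i j. 1 \<le> i \<longrightarrow> i \<le> j \<longrightarrow> j \<le> n \<longrightarrow> h j \<le> h i) \<and> h n > 0"

text \<open>A schedule cuts a bamboo of index in {1..n} at the end of each day t \<ge> 1
  (the value at 0 is irrelevant).\<close>
definition schedule :: "nat \<Rightarrow> (nat \<Rightarrow> nat) \<Rightarrow> bool" where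
  "schedule n \<sigma> \<longleftrightarrow> (\<forall>t\<ge>1. \<sigma> t \<in> {1..n})"

text \<open>Height of bamboo j at the end of day t, after the cut of day t
  (day 0 = initial state, height 0).\<close>
fun height_after :: "(nat \<Rightarrow> real) \<Rightarrow> (nat \<Rightarrow> nat) \<Rightarrow> nat \<Rightarrow> nat \<Rightarrow> real" where
  "height_after h \<sigma> j 0 = 0"
| "height_after h \<sigma> j (Suc t) =
     (if \<sigma> (Suc t) = j then 0 else height_after h \<sigma> j t + h j)"

definition height_before :: "(nat \<Rightarrow> real) \<Rightarrow> (nat \<Rightarrow> nat) \<Rightarrow> nat \<Rightarrow> nat \<Rightarrow> real" where
  "height_before h \<sigma> j t = height_after h \<sigma> j (t - 1) + h j"

text \<open>H^*: infimum over schedules of the (supremum) height; equivalently the infimum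
  of all H that bound all heights of some schedule.\<close>
definition Hstar :: "nat \<Rightarrow> (nat \<Rightarrow> real) \<Rightarrow> real" where
  "Hstar n h = Inf {H. \<exists>\<sigma>. schedule n \<sigma> \<and>
      (\<forall>t\<ge>1. \<forall>j\<in>{1..n}. height_before h \<sigma> j t \<le> H)}"

definition S1 :: "nat \<Rightarrow> (nat \<Rightarrow> real) \<Rightarrow> nat set" where
  "S1 n h = {j\<in>{1..n}. 2/3 < h j \<and> h j \<le> 1}"

definition S2 :: "nat \<Rightarrow> (nat \<Rightarrow> real) \<Rightarrow> nat set" where
  "S2 n h = {j\<in>{1..n}. 1/2 < h j \<and> h j \<le> 2/3}"

definition S3 :: "nat \<Rightarrow> (nat \<Rightarrow> real) \<Rightarrow> nat set" where
  "S3 n h = {j\<in>{1..n}. h j \<le> 1/2 \<and>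
      (\<exists>k::nat. k \<ge> 1 \<and> 2/3 * (1/2)^k < h j \<and> h j \<le> (1/2)^k)}"

definition S4 :: "nat \<Rightarrow> (nat \<Rightarrow> real) \<Rightarrow> nat set" where
  "S4 n h = {j\<in>{1..n}. h j \<le> 1/2 \<and>
      (\<exists>k::nat. k \<ge> 1 \<and> (1/2)^(k+1) < h j \<and> h j \<le> 2/3 * (1/2)^k)}"

definition h3 :: "(nat \<Rightarrow> real) \<Rightarrow> nat \<Rightarrow> real" where
  "h3 h j = (THE x. \<exists>k::nat. k \<ge> 1 \<and> x = (1/2)^k \<and> 2/3 * (1/2)^k < h j \<and> h j \<le> (1/2)^k)"

definition h4 :: "(nat \<Rightarrow> real) \<Rightarrow> nat \<Rightarrow> real" where
  "h4 h j = (THE x. \<exists>k::nat. k \<ge> 1 \<and> x = 2/3 * (1/2)^k \<and> (1/2)^(k+1) < h j \<and> h j \<le> 2/3 * (1/2)^k)"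

definition sh3 :: "nat \<Rightarrow> (nat \<Rightarrow> real) \<Rightarrow> real" where
  "sh3 n h = (\<Sum>j\<in>S3 n h. h3 h j)"

definition sh4 :: "nat \<Rightarrow> (nat \<Rightarrow> real) \<Rightarrow> real" where
  "sh4 n h = (\<Sum>j\<in>S4 n h. h4 h j)"

definition pi1 :: "nat \<Rightarrow> (nat \<Rightarrow> real) \<Rightarrow> int" where
  "pi1 n h = int (card (S1 n h))"

definition pi3 :: "nat \<Rightarrow> (nat \<Rightarrow> real) \<Rightarrow> int" where
  "pi3 n h = \<lfloor>sh3 n h\<rfloor>"

definition pi4 :: "nat \<Rightarrow> (nat \<Rightarrow> real) \<Rightarrow> int" where
  "pi4 n h = \<lfloor>sh4 n h\<rfloor>"

definition f3 :: "nat \<Rightarrow> (nat \<Rightarrow> real) \<Rightarrow> real" where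
  "f3 n h = sh3 n h - of_int (pi3 n h)"

definition f4 :: "nat \<Rightarrow> (nat \<Rightarrow> real) \<Rightarrow> real" where
  "f4 n h = sh4 n h - of_int (pi4 n h)"

definition z_a :: "nat \<Rightarrow> (nat \<Rightarrow> real) \<Rightarrow> real" where
  "z_a n h = of_int (pi1 n h + int (card (S2 n h)) + pi3 n h + pi4 n h
                     + \<lceil>f3 n h + f4 n h\<rceil>)"

definition z_b :: "nat \<Rightarrow> (nat \<Rightarrow> real) \<Rightarrow> ereal" where
  "z_b n h = (if S2 n h = {} then \<infinity> else
     (let hs = Max (h ` S2 n h);
          f2 = (if odd (card (S2 n h)) then 1/2 else 0 :: real)
      in ereal (2 * hs * of_int (pi1 n h + int (card (S2 n h) div 2) + pi3 n h + pi4 n h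
                                  + \<lceil>f2 + f3 n h + f4 n h\<rceil>))))"

definition H_PW2 :: "nat \<Rightarrow> (nat \<Rightarrow> real) \<Rightarrow> ereal" where
  "H_PW2 n h = min (ereal (z_a n h)) (z_b n h)"

end

theory Submission
  imports Defs
begin

text \<open>A schedule whose heights never exceed H cuts bamboo b_j at least h(j) t / H - 1 times
  during the first t days; as exactly t cuts happen in total, the density \<Sum>h(j) is a lower
  bound for H^*. The four classes contribute to this density at least
  1 + 2/3 (\<pi>_1 - 1), h^* + 1/2 (|S_2| - 1), 2/3 sh_3 and 2/3 sh_4 respectively, while for even
  |S_2| option (b) costs less than 2h^* (\<pi>_1 + |S_2|/2 + sh_3 + sh_4 + 1). The hypothesis
  \<pi>_1 + \<pi>_3 + \<pi>_4 \<le> |S_2| makes the S_2 term dominate, and since h^* \<le> 2/3 the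
  ratio of these two bounds stays below 32000/16947.\<close>

fun cut_count :: "(nat \<Rightarrow> nat) \<Rightarrow> nat \<Rightarrow> nat \<Rightarrow> nat" where
  "cut_count \<sigma> j 0 = 0"
| "cut_count \<sigma> j (Suc t) = cut_count \<sigma> j t + (if \<sigma> (Suc t) = j then 1 else 0)"

lemma sum_cut_count:
  assumes "schedule n \<sigma>"
  shows "(\<Sum>j\<in>{1..n}. cut_count \<sigma> j t) = t"
proof (induction t)
  case 0
  then show ?case by simp
next
  case (Suc t)
  have "\<sigma> (Suc t) \<in> {1..n}"
    using assms unfolding schedule_def by auto
  then have "(\<Sum>j\<in>{1..n}. if \<sigma> (Suc t) = j then 1 else 0::nat) = 1"
    by (simp add: sum.delta)
  with Suc show ?case
    by (simp add: sum.distrib)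
qed

lemma height_after_le_bound:
  assumes "\<forall>t\<ge>1. height_before h \<sigma> j t \<le> H" and "0 \<le> h j"
  shows "height_after h \<sigma> j t \<le> H"
  using assms(1)[rule_format, of "Suc t"] assms(2) by (simp add: height_before_def)

lemma growth_le_cut_count:
  assumes "\<forall>t\<ge>1. height_before h \<sigma> j t \<le> H"
  shows "h j * real t \<le> H * real (cut_count \<sigma> j t) + height_after h \<sigma> j t"
proof (induction t)
  case 0
  then show ?case by simp
next
  case (Suc t)
  have "height_after h \<sigma> j t + h j \<le> H"
    using assms[rule_format, of "Suc t"] by (simp add: height_before_def)
  with Suc show ?case
    by (simp add: algebra_simps)
qed

lemma sum_rates_le_height_bound:
  assumes "schedule n \<sigma>" and nonneg: "\<forall>j\<in>{1..n}. 0 \<le> h j"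
    and bound: "\<forall>t\<ge>1. \<forall>j\<in>{1..n}. height_before h \<sigma> j t \<le> H"
  shows "(\<Sum>j\<in>{1..n}. h j) \<le> H"
proof (rule ccontr)
  define D where "D = (\<Sum>j\<in>{1..n}. h j)"
  assume "\<not> D \<le> H"
  then have gap: "0 < D - H" by simp
  have density: "D * real t \<le> H * real t + H * real n" for t
  proof -
    have "h j * real t \<le> H * real (cut_count \<sigma> j t) + H" if "j \<in> {1..n}" for j
      using growth_le_cut_count[of h \<sigma> j H t] height_after_le_bound[of h \<sigma> j H t]
        bound nonneg that by fastforce
    then have "(\<Sum>j\<in>{1..n}. h j * real t) \<le> (\<Sum>j\<in>{1..n}. H * real (cut_count \<sigma> j t) + H)"
      by (rule sum_mono)
    also have "\<dots> = H * real t + H * real n"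
      using sum_cut_count[OF assms(1), of t]
      by (simp add: sum.distrib flip: sum_distrib_left of_nat_sum)
    finally show ?thesis
      by (simp add: D_def sum_distrib_right)
  qed
  obtain t :: nat where "H * real n / (D - H) < real t"
    using reals_Archimedean2 by blast
  with gap have "H * real n < real t * (D - H)"
    by (simp add: pos_divide_less_eq)
  with density[of t] show False
    by (simp add: algebra_simps)
qed

lemma height_after_le_elapsed:
  "0 \<le> h j \<Longrightarrow> height_after h \<sigma> j t \<le> h j * real t"
  by (induction t) (auto simp: algebra_simps)

lemma height_after_le_since_cut:
  assumes "0 \<le> h j" and "\<sigma> t' = j" and "1 \<le> t'" and "t' \<le> t"
  shows "height_after h \<sigma> j t \<le> h j * real (t - t')"
  using assms(4)
proof (induction t)
  case 0
  then show ?case using assms(3) by simp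
next
  case (Suc t)
  show ?case
  proof (cases "\<sigma> (Suc t) = j")
    case True
    then show ?thesis using assms(1) by simp
  next
    case False
    with Suc.prems assms(2) have "t' \<le> t"
      by (cases "t' = Suc t") auto
    with False Suc.IH show ?thesis
      by (simp add: Suc_diff_le algebra_simps)
  qed
qed

lemma height_before_le_of_cut_windows:
  assumes "0 \<le> h j"
    and windows: "\<And>m. p \<le> m \<Longrightarrow> \<exists>t'. \<sigma> t' = j \<and> 1 \<le> t' \<and> t' \<le> m \<and> m < t' + p"
  shows "height_before h \<sigma> j t \<le> h j * real p"
proof -
  have "height_after h \<sigma> j m \<le> h j * (real p - 1)" for m
  proof (cases "m < p")
    case True
    then have "real m \<le> real p - 1" by linarith
    then show ?thesis
      using height_after_le_elapsed[of h j \<sigma> m] assms(1)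
      by (meson mult_left_mono order_trans)
  next
    case False
    then obtain t' where "\<sigma> t' = j" "1 \<le> t'" "t' \<le> m" "m < t' + p"
      using windows[of m] by auto
    then have "height_after h \<sigma> j m \<le> h j * real (m - t')" and "real (m - t') \<le> real p - 1"
      using height_after_le_since_cut[of h j \<sigma> t' m] assms(1) by auto
    then show ?thesis
      using assms(1) by (meson mult_left_mono order_trans)
  qed
  then show ?thesis
    by (simp add: height_before_def algebra_simps)
qed

lemma bgt_instance_rate_bounds:
  assumes "bgt_instance n h" and "j \<in> {1..n}"
  shows "0 < h j" and "h j \<le> 1"
proof -
  have "h n \<le> h j" "h j \<le> h 1" "0 < h n" "h 1 = 1"
    using assms unfolding bgt_instance_def by auto
  then show "0 < h j" and "h j \<le> 1" by auto
qed

definition round_robin :: "nat \<Rightarrow> nat \<Rightarrow> nat" where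
  "round_robin n t = (t - 1) mod n + 1"

lemma schedule_round_robin: "1 \<le> n \<Longrightarrow> schedule n (round_robin n)"
  by (auto simp: schedule_def round_robin_def Suc_le_eq)

lemma round_robin_cut_window:
  assumes "j \<in> {1..n}" and "n \<le> m"
  shows "\<exists>t'. round_robin n t' = j \<and> 1 \<le> t' \<and> t' \<le> m \<and> m < t' + n"
proof -
  define t' where "t' = j + n * ((m - j) div n)"
  have "t' - 1 = (j - 1) + n * ((m - j) div n)"
    using assms(1) by (simp add: t'_def)
  then have "(t' - 1) mod n = (j - 1) mod n"
    by simp
  also have "\<dots> = j - 1"
    using assms(1) by (intro mod_less) auto
  finally have "round_robin n t' = j"
    using assms(1) by (simp add: round_robin_def)
  moreover have "t' + (m - j) mod n = m"
    using assms by (simp add: t'_def add.assoc)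
  moreover have "(m - j) mod n < n" and "1 \<le> t'"
    using assms by (auto simp: t'_def)
  ultimately show ?thesis
    by (metis add_less_cancel_left le_add1)
qed

lemma bounded_schedule_exists:
  assumes "bgt_instance n h"
  shows "\<exists>\<sigma>. schedule n \<sigma> \<and> (\<forall>t\<ge>1. \<forall>j\<in>{1..n}. height_before h \<sigma> j t \<le> real n)"
proof (intro exI conjI allI impI ballI)
  have "1 \<le> n"
    using assms by (simp add: bgt_instance_def)
  then show "schedule n (round_robin n)"
    by (rule schedule_round_robin)
  fix t j
  assume "j \<in> {1..n}"
  then have "0 \<le> h j" "h j \<le> 1"
    using bgt_instance_rate_bounds[OF assms] by (auto simp: less_imp_le)
  then show "height_before h (round_robin n) j t \<le> real n"
    using height_before_le_of_cut_windows[of h j n "round_robin n" t] round_robin_cut_window[OF \<open>j \<in> {1..n}\<close>]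
    by (meson mult_left_le_one_le of_nat_0_le_iff order_trans)
qed

lemma sum_rates_le_Hstar:
  assumes "bgt_instance n h"
  shows "(\<Sum>j\<in>{1..n}. h j) \<le> Hstar n h"
proof -
  have "\<forall>j\<in>{1..n}. 0 \<le> h j"
    using bgt_instance_rate_bounds(1)[OF assms] by (auto simp: less_imp_le)
  then show ?thesis
    unfolding Hstar_def
    using bounded_schedule_exists[OF assms] sum_rates_le_height_bound
    by (intro cInf_greatest) auto
qed

lemma scaled_half_pow_interval_unique:
  fixes a b x :: real
  assumes "0 < a" and "b \<le> 2 * a"
    and "a * (1/2)^k < x" and "x \<le> b * (1/2)^k"
    and "a * (1/2)^l < x" and "x \<le> b * (1/2)^l"
  shows "k = l"
proof -
  have "0 < a * (1/2)^k"
    using assms(1) by simp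
  then have "0 < b * (1/2)^k"
    using assms(3,4) by linarith
  then have "0 < b"
    by (simp add: zero_less_mult_iff)
  have False if "k' < l'" and "a * (1/2)^k' < x" and "x \<le> b * (1/2)^l'" for k' l'
  proof -
    have "(1/2::real)^l' \<le> (1/2)^Suc k'"
      using that(1) by (intro power_decreasing) auto
    then have "b * (1/2)^l' \<le> b / 2 * (1/2)^k'"
      using \<open>0 < b\<close> by (simp add: mult_left_mono)
    also have "\<dots> \<le> a * (1/2)^k'"
      using assms(2) by (simp add: mult_right_mono)
    finally show False
      using that(2,3) by linarith
  qed
  then have "\<not> k < l" and "\<not> l < k"
    using assms(3-6) by blast+
  then show ?thesis
    by simp
qed

lemma h3_eq:
  assumes "1 \<le> k" and "2/3 * (1/2)^k < h j" and "h j \<le> (1/2)^k"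
  shows "h3 h j = (1/2)^k"
  unfolding h3_def
proof (rule the_equality)
  show "\<exists>k'::nat. k' \<ge> 1 \<and> (1/2)^k = (1/2::real)^k' \<and> 2/3 * (1/2)^k' < h j \<and> h j \<le> (1/2)^k'"
    using assms by blast
next
  fix x
  assume "\<exists>k'::nat. k' \<ge> 1 \<and> x = (1/2)^k' \<and> 2/3 * (1/2)^k' < h j \<and> h j \<le> (1/2)^k'"
  then obtain k' where "x = (1/2)^k'" and "2/3 * (1/2)^k' < h j" and "h j \<le> (1/2)^k'"
    by blast
  moreover from this assms have "k' = k"
    by (intro scaled_half_pow_interval_unique[of "2/3" 1 k' "h j" k]) auto
  ultimately show "x = (1/2)^k"
    by simp
qed

lemma h4_eq:
  assumes "1 \<le> k" and "(1/2)^(k+1) < h j" and "h j \<le> 2/3 * (1/2)^k"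
  shows "h4 h j = 2/3 * (1/2)^k"
  unfolding h4_def
proof (rule the_equality)
  show "\<exists>k'::nat. k' \<ge> 1 \<and> 2/3 * (1/2)^k = 2/3 * (1/2::real)^k' \<and> (1/2)^(k'+1) < h j \<and> h j \<le> 2/3 * (1/2)^k'"
    using assms by blast
next
  fix x
  assume "\<exists>k'::nat. k' \<ge> 1 \<and> x = 2/3 * (1/2)^k' \<and> (1/2)^(k'+1) < h j \<and> h j \<le> 2/3 * (1/2)^k'"
  then obtain k' where "x = 2/3 * (1/2)^k'" and "(1/2)^(k'+1) < h j" and "h j \<le> 2/3 * (1/2)^k'"
    by blast
  moreover from this assms have "k' = k"
    by (intro scaled_half_pow_interval_unique[of "1/2" "2/3" k' "h j" k]) auto
  ultimately show "x = 2/3 * (1/2)^k"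
    by simp
qed

lemma h3_bounds:
  assumes "j \<in> S3 n h"
  shows "0 < h3 h j" and "h3 h j < 3/2 * h j"
proof -
  obtain k where "1 \<le> k" "2/3 * (1/2::real)^k < h j" "h j \<le> (1/2)^k"
    using assms unfolding S3_def by auto
  then show "0 < h3 h j" and "h3 h j < 3/2 * h j"
    by (simp_all add: h3_eq)
qed

lemma h4_bounds:
  assumes "j \<in> S4 n h"
  shows "0 < h4 h j" and "h4 h j < 3/2 * h j"
proof -
  obtain k where "1 \<le> k" "(1/2::real)^(k+1) < h j" "h j \<le> 2/3 * (1/2)^k"
    using assms unfolding S4_def by auto
  then show "0 < h4 h j" and "h4 h j < 3/2 * h j"
    by (simp_all add: h4_eq)
qed

lemma S3_S4_disjoint: "S3 n h \<inter> S4 n h = {}"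
proof (rule ccontr)
  assume "S3 n h \<inter> S4 n h \<noteq> {}"
  then obtain j k l where k: "2/3 * (1/2::real)^k < h j" "h j \<le> (1/2)^k"
    and l: "(1/2::real)^(l+1) < h j" "h j \<le> 2/3 * (1/2)^l"
    unfolding S3_def S4_def by blast
  from k l have "k = l"
    by (intro scaled_half_pow_interval_unique[of "1/2" 1 k "h j" l]) auto
  with k l show False
    by simp
qed

lemma sh3_nonneg: "0 \<le> sh3 n h"
  unfolding sh3_def by (auto intro!: sum_nonneg dest: h3_bounds simp: less_imp_le)

lemma sh4_nonneg: "0 \<le> sh4 n h"
  unfolding sh4_def by (auto intro!: sum_nonneg dest: h4_bounds simp: less_imp_le)

lemma sh3_le_sum_rates: "2/3 * sh3 n h \<le> (\<Sum>j\<in>S3 n h. h j)"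
proof -
  have "sh3 n h \<le> (\<Sum>j\<in>S3 n h. 3/2 * h j)"
    unfolding sh3_def by (rule sum_mono) (auto dest: h3_bounds simp: less_imp_le)
  also have "\<dots> = 3/2 * (\<Sum>j\<in>S3 n h. h j)"
    by (rule sum_distrib_left[symmetric])
  finally show ?thesis
    by simp
qed

lemma sh4_le_sum_rates: "2/3 * sh4 n h \<le> (\<Sum>j\<in>S4 n h. h j)"
proof -
  have "sh4 n h \<le> (\<Sum>j\<in>S4 n h. 3/2 * h j)"
    unfolding sh4_def by (rule sum_mono) (auto dest: h4_bounds simp: less_imp_le)
  also have "\<dots> = 3/2 * (\<Sum>j\<in>S4 n h. h j)"
    by (rule sum_distrib_left[symmetric])
  finally show ?thesis
    by simp
qed

lemma sum_ge_member_plus_card: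
  fixes f :: "'a \<Rightarrow> real"
  assumes "finite A" and "x \<in> A" and "\<And>y. y \<in> A \<Longrightarrow> c \<le> f y"
  shows "f x + c * (real (card A) - 1) \<le> sum f A"
proof -
  have "real (card (A - {x})) * c \<le> sum f (A - {x})"
    using assms(3) by (intro sum_bounded_below) auto
  moreover have "0 < card A"
    using assms(1,2) card_gt_0_iff by blast
  then have "real (card (A - {x})) = real (card A) - 1"
    using assms(2) by (simp add: card_Diff_singleton of_nat_diff)
  moreover have "sum f A = f x + sum f (A - {x})"
    using assms(1,2) by (simp add: sum.remove)
  ultimately show ?thesis
    by (simp add: mult.commute)
qed

lemma sum_rate_classes_le_sum_rates:
  assumes "bgt_instance n h"
  shows "(\<Sum>j\<in>S1 n h. h j) + (\<Sum>j\<in>S2 n h. h j) + (\<Sum>j\<in>S3 n h. h j) + (\<Sum>j\<in>S4 n h. h j)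
    \<le> (\<Sum>j\<in>{1..n}. h j)"
proof -
  have finite: "finite (S1 n h)" "finite (S2 n h)" "finite (S3 n h)" "finite (S4 n h)"
    unfolding S1_def S2_def S3_def S4_def by auto
  have "S1 n h \<inter> S2 n h = {}" and "(S1 n h \<union> S2 n h) \<inter> (S3 n h \<union> S4 n h) = {}"
    unfolding S1_def S2_def S3_def S4_def by auto
  with finite S3_S4_disjoint
  have "(\<Sum>j\<in>S1 n h \<union> S2 n h \<union> (S3 n h \<union> S4 n h). h j) =
      (\<Sum>j\<in>S1 n h. h j) + (\<Sum>j\<in>S2 n h. h j) + ((\<Sum>j\<in>S3 n h. h j) + (\<Sum>j\<in>S4 n h. h j))"
    by (simp add: sum.union_disjoint)
  moreover have "(\<Sum>j\<in>S1 n h \<union> S2 n h \<union> (S3 n h \<union> S4 n h). h j) \<le> (\<Sum>j\<in>{1..n}. h j)"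
    using bgt_instance_rate_bounds(1)[OF assms]
    by (intro sum_mono2) (auto simp: S1_def S2_def S3_def S4_def less_imp_le)
  ultimately show ?thesis
    by simp
qed

lemma sum_rates_lower_bound:
  assumes "bgt_instance n h" and "j \<in> S2 n h"
  shows "1 + 2/3 * (real (card (S1 n h)) - 1) + h j + 1/2 * (real (card (S2 n h)) - 1)
      + 2/3 * (sh3 n h + sh4 n h) \<le> (\<Sum>i\<in>{1..n}. h i)"
proof -
  have "1 \<in> S1 n h" and "h 1 = 1"
    using assms(1) unfolding S1_def bgt_instance_def by auto
  then have "1 + 2/3 * (real (card (S1 n h)) - 1) \<le> (\<Sum>i\<in>S1 n h. h i)"
    using sum_ge_member_plus_card[of "S1 n h" 1 "2/3" h] by (fastforce simp: S1_def)
  moreover have "h j + 1/2 * (real (card (S2 n h)) - 1) \<le> (\<Sum>i\<in>S2 n h. h i)"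
    using assms(2) by (intro sum_ge_member_plus_card) (auto simp: S2_def)
  ultimately show ?thesis
    using sum_rate_classes_le_sum_rates[OF assms(1)] sh3_le_sum_rates[of n h] sh4_le_sum_rates[of n h]
    by (simp add: distrib_left)
qed

lemma Max_rate_S2_mem:
  assumes "S2 n h \<noteq> {}"
  shows "Max (h ` S2 n h) \<in> h ` S2 n h"
  using assms by (intro Max_in) (auto simp: S2_def)

lemma card_S1_add_sh_less:
  assumes "int (card (S2 n h)) > pi1 n h + pi3 n h + pi4 n h - 1"
  shows "real (card (S1 n h)) + (sh3 n h + sh4 n h) < real (card (S2 n h)) + 2"
proof -
  have "sh3 n h < pi3 n h + 1" and "sh4 n h < pi4 n h + 1"
    unfolding pi3_def pi4_def by linarith+
  with assms show ?thesis
    unfolding pi1_def by linarith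
qed

lemma z_b_le_of_even:
  assumes "S2 n h \<noteq> {}" and "even (card (S2 n h))"
  shows "z_b n h \<le> ereal (2 * Max (h ` S2 n h) *
      (real (card (S1 n h)) + real (card (S2 n h)) / 2 + sh3 n h + sh4 n h + 1))"
proof -
  define hs where "hs = Max (h ` S2 n h)"
  define Z where "Z = pi1 n h + int (card (S2 n h) div 2) + pi3 n h + pi4 n h + \<lceil>f3 n h + f4 n h\<rceil>"
  have "0 \<le> hs"
    using Max_rate_S2_mem[OF assms(1)] by (auto simp: hs_def S2_def)
  have "z_b n h = ereal (2 * hs * of_int Z)"
    using assms by (simp add: z_b_def Z_def hs_def Let_def)
  moreover have "real (card (S2 n h) div 2) = real (card (S2 n h)) / 2"
    using assms(2) by (auto elim!: evenE)
  then have "of_int Z \<le> real (card (S1 n h)) + real (card (S2 n h)) / 2 + sh3 n h + sh4 n h + 1"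
    unfolding Z_def pi1_def f3_def f4_def by linarith
  ultimately show ?thesis
    using \<open>0 \<le> hs\<close> by (simp add: hs_def mult_left_mono)
qed

text \<open>With X = a + s/2 + T + 1 the claim reads hs (2X - c) \<le> c (\<dots>) for c = 32000/16947;
  as 2X \<ge> c the worst case is hs = 2/3, where it is linear and follows from a + T < s + 2.\<close>

lemma pinwheel_ratio_inequality:
  fixes hs a s T :: real
  assumes "0 \<le> hs" "hs \<le> 2/3" "0 \<le> a" "0 \<le> T" "4 \<le> s" "a + T < s + 2"
  shows "2 * hs * (a + s/2 + T + 1)
      \<le> 32000/16947 * (1 + 2/3 * (a - 1) + hs + 1/2 * (s - 1) + 2/3 * T)"
proof -
  define X where "X = a + s/2 + T + 1"
  have "hs * (2 * X - 32000/16947) \<le> 2/3 * (2 * X - 32000/16947)"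
    using assms unfolding X_def by (intro mult_right_mono) auto
  also have "\<dots> \<le> 32000/16947 * (1 + 2/3 * (a - 1) + 1/2 * (s - 1) + 2/3 * T)"
    using assms unfolding X_def by (simp add: field_simps)
  finally show ?thesis
    unfolding X_def by (simp add: field_simps)
qed

lemma option_b_cost_le_Hstar:
  assumes "bgt_instance n h"
    and "int (card (S2 n h)) > pi1 n h + pi3 n h + pi4 n h - 1"
    and "card (S2 n h) \<ge> 4" and "j \<in> S2 n h"
  shows "2 * h j * (real (card (S1 n h)) + real (card (S2 n h)) / 2 + sh3 n h + sh4 n h + 1)
    \<le> 32000/16947 * Hstar n h"
proof -
  define a where "a = real (card (S1 n h))"
  define s where "s = real (card (S2 n h))"
  define T where "T = sh3 n h + sh4 n h"
  have "0 \<le> h j" and "h j \<le> 2/3"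
    using assms(4) by (auto simp: S2_def)
  then have "2 * h j * (a + s/2 + T + 1)
      \<le> 32000/16947 * (1 + 2/3 * (a - 1) + h j + 1/2 * (s - 1) + 2/3 * T)"
    using card_S1_add_sh_less[OF assms(2)] assms(3) sh3_nonneg[of n h] sh4_nonneg[of n h]
    unfolding a_def s_def T_def by (intro pinwheel_ratio_inequality) auto
  also have "\<dots> \<le> 32000/16947 * Hstar n h"
    using order_trans[OF sum_rates_lower_bound[OF assms(1,4)] sum_rates_le_Hstar[OF assms(1)]]
    unfolding a_def s_def T_def by (intro mult_left_mono) auto
  finally show ?thesis
    by (simp add: a_def s_def T_def add.assoc)
qed

theorem proposition3:
  fixes n :: nat and h :: "nat \<Rightarrow> real"
  assumes "bgt_instance n h"
    and "int (card (S2 n h)) > pi1 n h + pi3 n h + pi4 n h - 1"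
    and "card (S2 n h) \<ge> 4"
    and "even (card (S2 n h))"
  shows "H_PW2 n h \<le> ereal (32000 / 16947 * Hstar n h)"
proof -
  have "S2 n h \<noteq> {}"
    using assms(3) by auto
  then obtain j where "j \<in> S2 n h" and j_max: "h j = Max (h ` S2 n h)"
    by (metis Max_rate_S2_mem imageE)
  have "z_b n h \<le> ereal (2 * h j *
      (real (card (S1 n h)) + real (card (S2 n h)) / 2 + sh3 n h + sh4 n h + 1))"
    using z_b_le_of_even[OF \<open>S2 n h \<noteq> {}\<close> assms(4)] by (simp only: j_max)
  also have "\<dots> \<le> ereal (32000/16947 * Hstar n h)"
    using option_b_cost_le_Hstar[OF assms(1-3) \<open>j \<in> S2 n h\<close>] by simp
  finally show ?thesis
    unfolding H_PW2_def by (rule min.coboundedI2)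
qed

end
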